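(* Fix integers $K,M,N\ge 1$ and constants $P_c>0$, $P_{\max}>0$. Let $(\tilde{\mathbf{H}}(n))_{n\ge1}$ be an arbitrary sequence of block-diagonal matrices $\tilde{\mathbf{H}}(n)=\operatorname{diag}(\tilde{\mathbf{H}}_1(n),\dots,\tilde{\mathbf{H}}_K(n))$ with $\tilde{\mathbf{H}}_k(n)\in\mathbb{C}^{N\times M}$, and suppose the induced gradients satisfy $\|\mathbf{V}(n)\|\le V_0$ for all $n$ and some constant $V_0>0$ (notation as in the context). Let $(\gamma_n)_{n\ge1}$ be a nonincreasing sequence of positive step-sizes with $\gamma_n\to0$ and $n\gamma_n\to\infty$, and let $\mathbf{X}(n)$ be generated by the online gradient ascent recursion $\mathbf{X}(n+1)=\boldsymbol{\Pi}(\mathbf{X}(n)+\gamma_n\mathbf{V}(n))$ from an initial point $\mathbf{X}(1)\in\mathcal{X}$, with transmit policy $\mathbf{Q}(n)=\mathbf{Q}(\mathbf{X}(n))$. Then the policy $\mathbf{Q}(n)$ leads to no regret, i.e. $\limsup_{T\to\infty}T^{-1}\mathrm{Reg}(T)\le0$; specifically, for all $T\ge1$, $$\mathrm{Reg}(T)\le \frac{1}{\gamma_T}+\frac12 V_0^2\sum_{n=1}^T\gamma_n,$$ and, for the step-size sequence $\gamma_n=\gamma n^{-1/2}$ with $\gamma>0$, $$\mathrm{Reg}(T)\le\frac{1+\gamma^2V_0^2}{\gamma}\sqrt{T}.$$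
   Context: All matrices are complex; $\mathbf{A}^\dagger$ is the conjugate transpose and $\|\mathbf{A}\|=\operatorname{tr}(\mathbf{A}^\dagger\mathbf{A})^{1/2}$ the Frobenius norm. The effective channel matrices $\tilde{\mathbf{H}}(n)$ are assumed uniformly bounded in $n$. Feasible transmit set: $\mathcal{Q}=\{\mathbf{Q}=\operatorname{diag}(\mathbf{Q}_1,\dots,\mathbf{Q}_K):\mathbf{Q}_k\in\mathbb{C}^{M\times M}\text{ Hermitian},\ \mathbf{Q}_k\succeq0,\ \sum_k\operatorname{tr}\mathbf{Q}_k\le P_{\max}\}$. Energy efficiency at stage $n$: $\mathrm{EE}(\mathbf{Q};n)=\dfrac{\log\det(\mathbf{I}+\tilde{\mathbf{H}}(n)\mathbf{Q}\tilde{\mathbf{H}}(n)^\dagger)}{P_c+\operatorname{tr}\mathbf{Q}}$, with rate $R_n(\mathbf{Q})=\log\det(\mathbf{I}+\tilde{\mathbf{H}}(n)\mathbf{Q}\tilde{\mathbf{H}}(n)^\dagger)$. Normalized set: $\mathcal{X}=\{\mathbf{X}=\operatorname{diag}(\mathbf{X}_1,\dots,\mathbf{X}_K):\mathbf{X}_k\in\mathbb{C}^{M\times M}\text{ Hermitian},\ \mathbf{X}_k\succeq0,\ \sum_k\operatorname{tr}\mathbf{X}_k\le1\}$, with the bijection $\mathbf{Q}(\mathbf{X})=\dfrac{P_cP_{\max}}{P_c+P_{\max}(1-\operatorname{tr}\mathbf{X})}\mathbf{X}$ onto $\mathcal{Q}$. Utility: $u(\mathbf{X};n)=\mathrm{EE}(\mathbf{Q}(\mathbf{X});n)=\dfrac{P_c+P_{\max}(1-\operatorname{tr}\mathbf{X})}{P_c(P_c+P_{\max})}\log\det\Big(\mathbf{I}+\dfrac{P_cP_{\max}\tilde{\mathbf{H}}(n)\mathbf{X}\tilde{\mathbf{H}}(n)^\dagger}{P_c+P_{\max}(1-\operatorname{tr}\mathbf{X})}\Big)$.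 Gradient: $\mathbf{V}(n)=\nabla_{\mathbf{X}}u(\mathbf{X}(n);n)=\dfrac{P_{\max}}{P_c+P_{\max}}\Big[\mathbf{A}_n+\dfrac{\operatorname{tr}(\mathbf{A}_n\mathbf{Q}(n))-R_n(\mathbf{Q}(n))}{P_c}\mathbf{I}\Big]$ where $\mathbf{A}_n=\tilde{\mathbf{H}}(n)^\dagger[\mathbf{I}+\tilde{\mathbf{H}}(n)\mathbf{Q}(n)\tilde{\mathbf{H}}(n)^\dagger]^{-1}\tilde{\mathbf{H}}(n)$ and $\mathbf{Q}(n)=\mathbf{Q}(\mathbf{X}(n))$. Projection: $\boldsymbol{\Pi}(\mathbf{Y})=\arg\min_{\mathbf{X}\in\mathcal{X}}\|\mathbf{X}-\mathbf{Y}\|^2$. Regret: $\mathrm{Reg}(T)=\max_{\mathbf{Q}\in\mathcal{Q}}\sum_{n=1}^T[\mathrm{EE}(\mathbf{Q};n)-\mathrm{EE}(\mathbf{Q}(n);n)]$; a policy leads to no regret if $\limsup_{T\to\infty}T^{-1}\mathrm{Reg}(T)\le0$. *)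

theory Defs
  imports "HOL-Analysis.Analysis"
begin

(* Index conventions: a KM x KM block matrix with K blocks of size M x M is
   a matrix complex^('k \<times> 't)^('k \<times> 't), the row/column index (k,i) meaning
   row i of block k.  The effective channel H(n) (KN x KM) has type
   complex^('k \<times> 't)^('k \<times> 'r). K = CARD('k), M = CARD('t), N = CARD('r). *)

definition ctrans :: "complex^'n^'m \<Rightarrow> complex^'m^'n" where
  "ctrans A = (\<chi> i j. cnj (A $ j $ i))"

definition frob :: "complex^'n^'m \<Rightarrow> real" where
  "frob A = sqrt (Re (trace (ctrans A ** A)))"

definition hermitian :: "complex^'n^'n \<Rightarrow> bool" where
  "hermitian A \<longleftrightarrow> ctrans A = A"

definition psd :: "complex^'n^'n \<Rightarrow> bool" where
  "psd A \<longleftrightarrow> hermitian A \<and>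
     (\<forall>v::complex^'n. 0 \<le> Re (\<Sum>i\<in>UNIV. cnj (v $ i) * (A *v v) $ i))"

definition blk :: "complex^('k::finite \<times> 'a::finite)^('k \<times> 'b::finite) \<Rightarrow> 'k \<Rightarrow> complex^'a^'b" where
  "blk A k = (\<chi> i j. A $ (k, i) $ (k, j))"

definition block_diag :: "complex^('k::finite \<times> 'a::finite)^('k \<times> 'b::finite) \<Rightarrow> bool" where
  "block_diag A \<longleftrightarrow> (\<forall>k i l j. k \<noteq> l \<longrightarrow> A $ (k, i) $ (l, j) = 0)"

definition Qset :: "real \<Rightarrow> (complex^('k::finite \<times> 't::finite)^('k \<times> 't)) set" where
  "Qset P = {Q. block_diag Q \<and> (\<forall>k. psd (blk Q k))
               \<and> (\<Sum>k\<in>UNIV. Re (trace (blk Q k))) \<le> P}"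

definition Xset :: "(complex^('k::finite \<times> 't::finite)^('k \<times> 't)) set" where
  "Xset = {X. block_diag X \<and> (\<forall>k. psd (blk X k))
               \<and> (\<Sum>k\<in>UNIV. Re (trace (blk X k))) \<le> 1}"

definition rate :: "complex^'c^'r \<Rightarrow> complex^'c^'c \<Rightarrow> real" where
  "rate H Q = ln (Re (det (mat 1 + H ** Q ** ctrans H)))"

definition EE :: "real \<Rightarrow> complex^'c^'r \<Rightarrow> complex^'c^'c \<Rightarrow> real" where
  "EE Pc H Q = rate H Q / (Pc + Re (trace Q))"

definition Qmap :: "real \<Rightarrow> real \<Rightarrow> complex^'c^'c \<Rightarrow> complex^'c^'c" where
  "Qmap Pc Pmax X = (Pc * Pmax / (Pc + Pmax * (1 - Re (trace X)))) *\<^sub>R X"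

definition Amat :: "complex^'c^'r \<Rightarrow> complex^'c^'c \<Rightarrow> complex^'c^'c" where
  "Amat H Q = ctrans H ** matrix_inv (mat 1 + H ** Q ** ctrans H) ** H"

definition grad :: "real \<Rightarrow> real \<Rightarrow> complex^'c^'r \<Rightarrow> complex^'c^'c \<Rightarrow> complex^'c^'c" where
  "grad Pc Pmax H X =
     (let Q = Qmap Pc Pmax X; A = Amat H Q in
      (Pmax / (Pc + Pmax)) *\<^sub>R (A + ((Re (trace (A ** Q)) - rate H Q) / Pc) *\<^sub>R mat 1))"

definition proj :: "(complex^('k::finite \<times> 't::finite)^('k \<times> 't)) \<Rightarrow> complex^('k \<times> 't)^('k \<times> 't)" where
  "proj Y = (ARG_MIN (\<lambda>X. (frob (X - Y))\<^sup>2) X. X \<in> Xset)"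

definition regret :: "real \<Rightarrow> real \<Rightarrow> (nat \<Rightarrow> complex^('k::finite \<times> 't::finite)^('k \<times> 'r::finite))
     \<Rightarrow> (nat \<Rightarrow> complex^('k \<times> 't)^('k \<times> 't)) \<Rightarrow> nat \<Rightarrow> real" where
  "regret Pc Pmax H Qn T =
     (SUP Q \<in> Qset Pmax. (\<Sum>n = 1..T. EE Pc (H n) Q - EE Pc (H n) (Qn n)))"

end

theory Submission
  imports Defs
begin

text \<open>The normalised utility \<open>u(X) = EE(Q(X))\<close> is concave in the sense that it lies below its
  tangent plane \<open>u(X) + \<langle>V, Y - X\<rangle>\<close>: this follows from the tangent inequality
  \<open>log det B' \<le> log det B + tr (B\<^sup>-\<^sup>1 (B' - B))\<close> for positive definite matrices (proved via
  a Cholesky factorisation and Hadamard's determinant bound), transported through the scaling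
  \<open>Q(X) = a(X) X\<close>. Zinkevich's analysis of projected online gradient ascent then applies: the
  projection onto the convex set \<open>Xset\<close> is non-expansive, each step trades the gradient term for a
  drop in \<open>\<parallel>X(n) - X\<parallel>\<^sup>2\<close> plus \<open>\<gamma>\<^sub>n V\<^sub>0\<^sup>2 / 2\<close>, and telescoping against the squared
  diameter \<open>2\<close> of \<open>Xset\<close> gives the regret bound. Every \<open>Q \<in> Qset P\<^sub>m\<^sub>a\<^sub>x\<close> is some \<open>Q(X)\<close>, so the bound
  holds for the supremum defining the regret.\<close>

section \<open>Conjugate transpose and the Frobenius inner product\<close>

lemma ctrans_nth [simp]: "ctrans A $ i $ j = cnj (A $ j $ i)"
  by (simp add: ctrans_def)

lemma ctrans_ctrans [simp]: "ctrans (ctrans A) = A"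
  by (simp add: vec_eq_iff)

lemma ctrans_mult: "ctrans (A ** B) = ctrans B ** ctrans (A::complex^'n^'m)"
  by (simp add: vec_eq_iff matrix_matrix_mult_def mult.commute)

lemma ctrans_add [simp]: "ctrans (A + B) = ctrans A + ctrans B"
  by (simp add: vec_eq_iff)

lemma ctrans_diff [simp]: "ctrans (A - B) = ctrans A - ctrans B"
  by (simp add: vec_eq_iff)

lemma ctrans_scaleR [simp]: "ctrans (c *\<^sub>R A) = c *\<^sub>R ctrans A"
  by (simp add: vec_eq_iff)

lemma ctrans_mat1 [simp]: "ctrans (mat 1 :: complex^'n^'n) = mat 1"
  by (simp add: vec_eq_iff mat_def)

lemma trace_ctrans: "trace (ctrans A) = cnj (trace (A::complex^'n^'n))"
  by (simp add: trace_def)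

lemma det_ctrans: "det (ctrans A) = cnj (det (A::complex^'n^'n))"
proof -
  have "ctrans A = transpose (\<chi> i j. cnj (A$i$j))"
    by (simp add: vec_eq_iff transpose_def)
  then have "det (ctrans A) = det (\<chi> i j. cnj (A$i$j))"
    by simp
  also have "\<dots> = cnj (det A)"
    by (simp add: det_def)
  finally show ?thesis .
qed

lemma Re_trace_scaleR [simp]: "Re (trace (c *\<^sub>R A)) = c * Re (trace (A::complex^'n^'n))"
  by (simp add: trace_def sum_distrib_left)

lemma inner_eq_Re_trace: "inner (A::complex^'n^'m) B = Re (trace (ctrans A ** B))"
  unfolding inner_vec_def trace_def matrix_matrix_mult_def
  by (simp add: inner_complex_def Re_sum) (subst sum.swap, simp)

lemma norm_eq_frob: "norm (A::complex^'n^'m) = frob A"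
  by (simp add: frob_def norm_eq_sqrt_inner inner_eq_Re_trace)

lemma norm_sq_eq_sum_entries:
  "(norm (X::complex^'n^'m))^2 = (\<Sum>i\<in>UNIV. \<Sum>j\<in>UNIV. (cmod (X$i$j))^2)"
  by (simp add: norm_vec_def L2_set_def sum_nonneg)

lemma matrix_diff_ldistrib: "(A::'a::ring_1^'n^'m) ** (B - C) = A ** B - A ** C"
  by (simp add: vec_eq_iff matrix_matrix_mult_def right_diff_distrib sum_subtractf)

lemma matrix_diff_rdistrib: "((A::'a::ring_1^'n^'m) - B) ** C = A ** C - B ** C"
  by (simp add: vec_eq_iff matrix_matrix_mult_def left_diff_distrib sum_subtractf)

lemma matrix_add_rdistrib: "((A::'a::semiring_1^'n^'m) + B) ** C = A ** C + B ** C"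
  by (simp add: vec_eq_iff matrix_matrix_mult_def distrib_right sum.distrib)

lemma matrix_inv_eqI:
  fixes A X :: "'a::field^'n^'n"
  assumes "A ** X = mat 1"
  shows "matrix_inv A = X"
proof -
  have "X ** A = mat 1"
    using assms matrix_left_right_inverse by blast
  then have "invertible A"
    using assms by (auto simp: invertible_def)
  then have "matrix_inv A ** A = mat 1"
    unfolding matrix_inv_def invertible_def by (rule someI2_ex) simp
  then have "matrix_inv A = matrix_inv A ** (A ** X)"
    using assms by simp
  also have "\<dots> = X"
    by (simp add: matrix_mul_assoc \<open>matrix_inv A ** A = mat 1\<close>)
  finally show ?thesis .
qed

section \<open>Hermitian forms\<close>

definition cdot :: "complex^'n \<Rightarrow> complex^'n \<Rightarrow> complex" where
  "cdot u w = (\<Sum>i\<in>UNIV. cnj (u$i) * w$i)"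

definition quad_form :: "complex^'n^'n \<Rightarrow> complex^'n \<Rightarrow> complex" where
  "quad_form A v = cdot v (A *v v)"

definition pos_def :: "complex^'n^'n \<Rightarrow> bool" where
  "pos_def A \<longleftrightarrow> hermitian A \<and> (\<forall>v. v \<noteq> 0 \<longrightarrow> 0 < Re (quad_form A v))"

lemma psd_iff_quad_form: "psd A \<longleftrightarrow> hermitian A \<and> (\<forall>v. 0 \<le> Re (quad_form A v))"
  by (simp add: psd_def quad_form_def cdot_def)

lemma cdot_mult_right: "cdot u ((A::complex^'n^'m) *v w) = cdot (ctrans A *v u) w"
  unfolding cdot_def matrix_vector_mult_def
  by (simp add: sum_distrib_left sum_distrib_right) (rule sum.swap[THEN trans], simp add: mult_ac)

lemma cdot_add_left: "cdot (u + w) x = cdot u x + cdot w x"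
  by (simp add: cdot_def distrib_right sum.distrib)

lemma cdot_add_right: "cdot x (u + w) = cdot x u + cdot x w"
  by (simp add: cdot_def distrib_left sum.distrib)

lemma cdot_axis [simp]: "cdot (axis i c) x = cnj c * x$i"
proof -
  have "cdot (axis i c) x = (\<Sum>j\<in>UNIV. if j = i then cnj c * x $ i else 0)"
    unfolding cdot_def by (rule sum.cong) (auto simp: axis_def)
  then show ?thesis
    by simp
qed

lemma mult_axis_nth [simp]: "((A::complex^'n^'m) *v axis j c)$i = A$i$j * c"
  by (simp add: matrix_vector_mult_def axis_def if_distrib cong: if_cong)

lemma quad_form_zero [simp]: "quad_form A 0 = 0"
  by (simp add: quad_form_def cdot_def)

lemma quad_form_axis: "quad_form A (axis i 1) = A$i$i"
  by (simp add: quad_form_def)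

lemma quad_form_congruence: "quad_form (ctrans P ** G ** P) w = quad_form G (P *v w)"
  by (simp add: quad_form_def cdot_mult_right matrix_vector_mul_assoc[symmetric])

lemma quad_form_add: "quad_form (A + B) w = quad_form A w + quad_form B w"
  by (simp add: quad_form_def cdot_def matrix_vector_mult_def distrib_left distrib_right
      sum.distrib vector_add_component)

lemma quad_form_scaleR: "quad_form (c *\<^sub>R A) w = c *\<^sub>R quad_form A w"
  by (simp add: quad_form_def cdot_def matrix_vector_mult_def)
    (simp add: scaleR_conv_of_real sum_distrib_left mult_ac)

lemma quad_form_sum_vectors:
  "quad_form X (u + w) = quad_form X u + quad_form X w + cdot u (X *v w) + cdot w (X *v u)"
  by (simp add: quad_form_def matrix_vector_right_distrib cdot_add_left cdot_add_right)

lemma Re_quad_form_mat1_pos: "w \<noteq> 0 \<Longrightarrow> 0 < Re (quad_form (mat 1) w)"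
proof -
  assume "w \<noteq> 0"
  then obtain j where "w$j \<noteq> 0"
    by (metis vec_eq_iff zero_index)
  then have "0 < (Re (w$j))^2 + (Im (w$j))^2"
    by (simp add: complex_neq_0)
  also have "\<dots> \<le> (\<Sum>i\<in>UNIV. (Re (w$i))^2 + (Im (w$i))^2)"
    by (rule member_le_sum) auto
  also have "\<dots> = Re (quad_form (mat 1) w)"
    by (simp add: quad_form_def cdot_def power2_eq_square)
  finally show ?thesis .
qed

lemma hermitian_entry: "hermitian G \<Longrightarrow> cnj (G$i$j) = G$j$i"
  unfolding hermitian_def by (metis ctrans_nth)

lemma hermitian_diag_real: "hermitian G \<Longrightarrow> G$i$i = of_real (Re (G$i$i))"
  using hermitian_entry[of G i i] by (metis Reals_cnj_iff complex_is_Real_iff of_real_Re)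

lemma hermitian_congruence: "hermitian G \<Longrightarrow> hermitian (ctrans P ** G ** P)"
  by (simp add: hermitian_def ctrans_mult matrix_mul_assoc)

lemma pos_def_imp_psd: "pos_def G \<Longrightarrow> psd G"
  unfolding pos_def_def psd_iff_quad_form
  by (metis less_eq_real_def quad_form_zero zero_complex.sel(1))

lemma pos_def_diag_pos: "pos_def G \<Longrightarrow> 0 < Re (G$i$i)"
  unfolding pos_def_def using quad_form_axis[of G i] by (metis axis_eq_0_iff one_neq_zero)

lemma psd_diag_nonneg: "psd G \<Longrightarrow> 0 \<le> Re (G$i$i)"
  unfolding psd_iff_quad_form using quad_form_axis[of G i] by metis

lemma psd_trace_nonneg: "psd G \<Longrightarrow> 0 \<le> Re (trace G)"
  unfolding trace_def Re_sum by (intro sum_nonneg psd_diag_nonneg)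

lemma psd_add: "psd A \<Longrightarrow> psd B \<Longrightarrow> psd (A + B)"
  by (simp add: psd_iff_quad_form quad_form_add hermitian_def)

lemma psd_scaleR: "psd A \<Longrightarrow> 0 \<le> c \<Longrightarrow> psd (c *\<^sub>R A)"
  by (simp add: psd_iff_quad_form quad_form_scaleR hermitian_def)

lemma psd_congruence: "psd Q \<Longrightarrow> psd (H ** Q ** ctrans H)"
  using hermitian_congruence[of Q "ctrans H"] quad_form_congruence[of "ctrans H" Q]
  by (simp add: psd_iff_quad_form)

lemma pos_def_mat1_add_psd: "psd K \<Longrightarrow> pos_def (mat 1 + K)"
  unfolding pos_def_def
  using Re_quad_form_mat1_pos
  by (auto simp: psd_iff_quad_form quad_form_add hermitian_def intro: add_pos_nonneg)

lemma pos_def_psd_add_mat1: "psd X \<Longrightarrow> e > 0 \<Longrightarrow> pos_def (X + e *\<^sub>R mat 1)"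
  unfolding pos_def_def
  using Re_quad_form_mat1_pos
  by (auto simp: psd_iff_quad_form quad_form_add quad_form_scaleR hermitian_def
      intro!: add_nonneg_pos mult_pos_pos)

section \<open>Cholesky factorisation with Hadamard's bound\<close>

lemma sum_if_eq_mult_left [simp]:
  "(\<Sum>l\<in>UNIV. (if l = (a::'n::finite) then c else 0) * f l) = c * (f a :: 'a::comm_ring_1)"
proof -
  have "(\<Sum>l\<in>UNIV. (if l = a then c else 0) * f l) = (\<Sum>l\<in>UNIV. if l = a then c * f l else 0)"
    by (rule sum.cong) auto
  then show ?thesis
    by simp
qed

lemma sum_if_eq_mult_right [simp]:
  "(\<Sum>l\<in>UNIV. f l * (if l = (a::'n::finite) then c else 0)) = (f a :: 'a::comm_ring_1) * c"
proof -
  have "(\<Sum>l\<in>UNIV. f l * (if l = a then c else 0)) = (\<Sum>l\<in>UNIV. if l = a then f l * c else 0)"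
    by (rule sum.cong) auto
  then show ?thesis
    by simp
qed

lemma if_zero_mult_simps:
  "(x::'a::comm_ring_1) * (if P then a else 0) = (if P then x * a else 0)"
  "(if P then a else 0) * (x::'a::comm_ring_1) = (if P then a * x else 0)"
  "(if P then b else 0) / (y::'b::field) = (if P then b / y else 0)"
  by simp_all

lemma det_unit_off_column:
  fixes F :: "'a::comm_ring_1^'n^'n"
  assumes "\<And>a b. b \<noteq> i \<Longrightarrow> F$a$b = (if a = b then 1 else 0)"
  shows "det F = F$i$i"
proof -
  let ?U = "UNIV :: 'n set"
  let ?PU = "{p. p permutes ?U}"
  have zero: "of_int (sign p) * (\<Prod>a\<in>?U. F$a$p a) = 0" if p: "p \<in> ?PU - {id}" for p
  proof -
    obtain a where a: "p a \<noteq> a"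
      using p by fastforce
    have "\<exists>c\<in>?U. F$c$p c = 0"
    proof (cases "p a = i")
      case False
      then show ?thesis using assms[of "p a" a] a by (metis UNIV_I)
    next
      case True
      then have "p i \<noteq> i"
        using a p by (metis permutes_inj inj_eq mem_Collect_eq DiffD1)
      then show ?thesis using assms[of "p i" i] by (metis UNIV_I)
    qed
    then show ?thesis
      by (simp add: prod_zero)
  qed
  have "{id} \<subseteq> ?PU"
    by (auto simp: permutes_id)
  from sum.mono_neutral_cong_left[OF finite_permutations[of ?U] this, of _ "\<lambda>p. of_int (sign p) * (\<Prod>a\<in>?U. F$a$p a)"] zero
  have "det F = (\<Prod>a\<in>?U. F$a$a)"
    unfolding det_def by (simp add: sign_id)
  also have "\<dots> = F$i$i * (\<Prod>a\<in>?U - {i}. F$a$a)"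
    by (simp add: prod.remove)
  also have "(\<Prod>a\<in>?U - {i}. F$a$a) = 1"
    by (rule prod.neutral) (simp add: assms)
  finally show ?thesis
    by simp
qed

definition id_with_col :: "complex^'n \<Rightarrow> 'n \<Rightarrow> complex^'n^'n" where
  "id_with_col v i = (\<chi> a b. if b = i then v$a else (if a = b then 1 else 0))"

definition schur_pivot :: "complex^'n^'n \<Rightarrow> 'n \<Rightarrow> complex^'n^'n" where
  "schur_pivot G i = (\<chi> a b. G$a$b - G$a$i * G$i$b / G$i$i + (if a = i \<and> b = i then 1 else 0))"

lemma id_with_col_mult_nth:
  "(id_with_col v i ** M)$a$k = v$a * M$i$k + (if a = i then 0 else M$a$k)"
proof -
  have "(id_with_col v i ** M)$a$k =
      (\<Sum>l\<in>UNIV. (if l = i then v$a * M$i$k else 0) + (if l = a then (if a = i then 0 else M$a$k) else 0))"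
    unfolding matrix_matrix_mult_def id_with_col_def
    by (simp only: vec_lambda_beta, rule sum.cong) auto
  then show ?thesis
    by (simp add: sum.distrib)
qed

lemma mult_ctrans_id_with_col_nth:
  "(M ** ctrans (id_with_col v i))$a$b = M$a$i * cnj (v$b) + (if b = i then 0 else M$a$b)"
proof -
  have "(M ** ctrans (id_with_col v i))$a$b =
      (\<Sum>l\<in>UNIV. (if l = i then M$a$i * cnj (v$b) else 0) + (if l = b then (if b = i then 0 else M$a$b) else 0))"
    unfolding matrix_matrix_mult_def id_with_col_def
    by (simp only: vec_lambda_beta, rule sum.cong) auto
  then show ?thesis
    by (simp add: sum.distrib)
qed

lemma det_id_with_col: "det (id_with_col v i) = v$i"
proof -
  have "det (id_with_col v i) = id_with_col v i $i$i"
    by (rule det_unit_off_column) (simp add: id_with_col_def)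
  then show ?thesis
    by (simp add: id_with_col_def)
qed

text \<open>One step of Cholesky elimination: a pivot \<open>G$i$i = r > 0\<close> splits off as the
  column \<open>v = G$_$i / sqrt r\<close>, leaving the Schur complement with unit \<open>i\<close>-th row and column.\<close>

lemma hermitian_pivot_factor:
  fixes G :: "complex^'n^'n"
  assumes herm: "hermitian G" and r: "G$i$i = of_real r" "r > 0"
  defines "v \<equiv> (\<chi> a. G$a$i / of_real (sqrt r))"
  shows "G = id_with_col v i ** schur_pivot G i ** ctrans (id_with_col v i)"
    and "det (id_with_col v i) = of_real (sqrt r)"
proof -
  let ?s = "complex_of_real (sqrt r)"
  have he: "\<And>a b. cnj (G$a$b) = G$b$a"
    using hermitian_entry[OF herm] .
  have ss: "?s * ?s = of_real r" "cnj ?s = ?s" "?s \<noteq> 0"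
    using r by (simp_all flip: of_real_mult)
  have unit: "schur_pivot G i $i$k = (if k = i then 1 else 0)"
    "schur_pivot G i $k$i = (if k = i then 1 else 0)" for k
    using r he[of i k] he[of k i] by (auto simp: schur_pivot_def)
  have vv: "v$a * cnj (v$b) = G$a$i * G$i$b / of_real r" for a b
    using ss by (simp add: v_def he field_simps flip: ss(1))
  show "G = id_with_col v i ** schur_pivot G i ** ctrans (id_with_col v i)"
    unfolding vec_eq_iff mult_ctrans_id_with_col_nth id_with_col_mult_nth
    using r(2) by (auto simp: unit vv schur_pivot_def r(1) less_irrefl)
  show "det (id_with_col v i) = ?s"
    using ss by (simp add: det_id_with_col v_def r flip: ss(1))
qed

lemma schur_congruence:
  fixes G :: "complex^'n^'n"
  assumes herm: "hermitian G" and r: "G$i$i = of_real r" "r > 0"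
  defines "P \<equiv> (\<chi> a b. (if a = b then 1 else 0) - (if a = i then G$i$b / of_real r else 0))"
  shows "ctrans P ** G ** P = (\<chi> a b. G$a$b - G$a$i * G$i$b / of_real r)"
proof -
  have he: "\<And>a b. cnj (G$a$b) = G$b$a"
    using hermitian_entry[OF herm] .
  have left: "(ctrans P ** G)$a$k = G$a$k - G$a$i * G$i$k / of_real r" for a k
    unfolding matrix_matrix_mult_def P_def
    by (simp add: left_diff_distrib sum_subtractf if_distrib[where f=cnj] he cong: if_cong)
  show ?thesis
    unfolding vec_eq_iff
    by (simp add: matrix_matrix_mult_def[of "ctrans P ** G"] left)
      (simp add: P_def right_diff_distrib left_diff_distrib sum_subtractf r if_zero_mult_simps
        cong: if_cong)
qed

lemma quad_form_unit_diag:
  "quad_form (\<chi> a b. if a = i \<and> b = i then 1 else 0) w = cnj (w$i) * w$i"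
proof -
  have "(\<chi> a b. if a = i \<and> b = i then 1 else 0) *v w = axis i (w$i)"
    by (simp add: vec_eq_iff matrix_vector_mult_def axis_def if_zero_mult_simps cong: if_cong)
  then show ?thesis
    by (simp add: quad_form_def cdot_def axis_def if_zero_mult_simps cong: if_cong)
qed

lemma pos_def_schur_pivot:
  fixes G :: "complex^'n^'n"
  assumes pd: "pos_def G"
  shows "pos_def (schur_pivot G i)"
proof -
  have herm: "hermitian G"
    using pd by (simp add: pos_def_def)
  define r where "r = Re (G$i$i)"
  have r: "G$i$i = of_real r" "r > 0"
    using hermitian_diag_real[OF herm, of i] pos_def_diag_pos[OF pd, of i] by (simp_all add: r_def)
  define P where "P \<equiv> (\<chi> a b. (if a = b then 1 else 0) - (if a = i then G$i$b / of_real r else 0)) :: complex^'n^'n"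
  define E where "E \<equiv> (\<chi> a b. if a = i \<and> b = i then 1 else 0) :: complex^'n^'n"
  have eq: "schur_pivot G i = ctrans P ** G ** P + E"
    unfolding schur_congruence[OF herm r, folded P_def] E_def schur_pivot_def r(1)
    by (simp add: vec_eq_iff)
  have Pw: "(P *v w)$j = w$j" if "j \<noteq> i" for w j
    using that
    by (simp add: P_def matrix_vector_mult_def left_diff_distrib sum_subtractf if_zero_mult_simps
        cong: if_cong)
  show ?thesis
    unfolding eq pos_def_def
  proof (intro conjI allI impI)
    show "hermitian (ctrans P ** G ** P + E)"
      using hermitian_congruence[OF herm, of P] by (simp add: hermitian_def E_def vec_eq_iff)
  next
    fix w :: "complex^'n"
    assume w: "w \<noteq> 0"
    have q: "quad_form (ctrans P ** G ** P + E) w = quad_form G (P *v w) + cnj (w$i) * w$i"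
      by (simp add: quad_form_add quad_form_congruence E_def quad_form_unit_diag)
    have g0: "0 \<le> Re (quad_form G (P *v w))"
      using pos_def_imp_psd[OF pd] by (simp add: psd_iff_quad_form)
    show "0 < Re (quad_form (ctrans P ** G ** P + E) w)"
    proof (cases "w$i = 0")
      case False
      have "cnj (w$i) * w$i = of_real ((cmod (w$i))^2)"
        by (metis complex_norm_square mult.commute)
      then have "0 < Re (cnj (w$i) * w$i)"
        using False by simp
      then show ?thesis
        using q g0 by simp
    next
      case True
      obtain j where j: "w$j \<noteq> 0"
        using w by (auto simp: vec_eq_iff)
      then have "P *v w \<noteq> 0"
        using True Pw[of j w] by (metis zero_index)
      then have "0 < Re (quad_form G (P *v w))"
        using pd by (simp add: pos_def_def)
      then show ?thesis
        using q True by simp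
    qed
  qed
qed

lemma schur_pivot_diag_le:
  fixes G :: "complex^'n^'n"
  assumes herm: "hermitian G" and r: "G$i$i = of_real r" "r > 0"
  shows "Re (schur_pivot G i $j$j) \<le> (if j = i then 1 else Re (G$j$j))"
proof (cases "j = i")
  case True
  then show ?thesis
    using r by (simp add: schur_pivot_def)
next
  case False
  have "G$j$i * G$i$j = of_real ((cmod (G$j$i))^2)"
    using hermitian_entry[OF herm, of j i] by (metis complex_norm_square)
  then have "Re (G$j$i * G$i$j / of_real r) \<ge> 0"
    using r by simp
  then show ?thesis
    using False by (simp add: schur_pivot_def r(1))
qed

lemma prod_UNIV_split_at:
  fixes i :: "'n::finite"
  shows "(\<Prod>j\<in>UNIV. f j) = f i * (\<Prod>j\<in>UNIV. if j = i then 1 else (f j :: real))"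
proof -
  have "(\<Prod>j\<in>UNIV. if j = i then 1 else f j) = (\<Prod>j\<in>UNIV - {i}. f j)"
    by (subst prod.remove[of _ i]) (auto intro!: prod.cong)
  moreover have "(\<Prod>j\<in>UNIV. f j) = f i * (\<Prod>j\<in>UNIV - {i}. f j)"
    by (simp add: prod.remove)
  ultimately show ?thesis
    by simp
qed

lemma schur_pivot_unit_row:
  fixes G :: "complex^'n^'n"
  assumes herm: "hermitian G" and r: "G$i$i = of_real r" "r > 0"
    and row: "j = i \<or> (\<forall>k. G$j$k = (if j = k then 1 else 0))"
  shows "schur_pivot G i $j$k = (if j = k then 1 else 0)"
proof (cases "j = i")
  case True
  then show ?thesis
    using r hermitian_entry[OF herm, of k i] by (auto simp: schur_pivot_def)
next
  case False
  then have "G$j$k = (if j = k then 1 else 0)" "G$j$i = 0"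
    using row by auto
  then show ?thesis
    using False by (simp add: schur_pivot_def)
qed

lemma schur_pivot_prod_diag_le:
  fixes G :: "complex^'n^'n"
  assumes pd: "pos_def G" and r: "G$i$i = of_real r"
  shows "r * (\<Prod>j\<in>UNIV. Re (schur_pivot G i $j$j)) \<le> (\<Prod>j\<in>UNIV. Re (G$j$j))"
proof -
  have herm: "hermitian G"
    using pd by (simp add: pos_def_def)
  have "r > 0"
    using pos_def_diag_pos[OF pd, of i] r by simp
  have "(\<Prod>j\<in>UNIV. Re (schur_pivot G i $j$j)) \<le> (\<Prod>j\<in>UNIV. if j = i then 1 else Re (G$j$j))"
    by (rule prod_mono)
      (use schur_pivot_diag_le[OF herm r \<open>r > 0\<close>]
        psd_diag_nonneg[OF pos_def_imp_psd[OF pos_def_schur_pivot[OF pd]]] in auto)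
  then have "r * (\<Prod>j\<in>UNIV. Re (schur_pivot G i $j$j)) \<le> r * (\<Prod>j\<in>UNIV. if j = i then 1 else Re (G$j$j))"
    using \<open>r > 0\<close> by (simp add: mult_left_mono)
  also have "\<dots> = (\<Prod>j\<in>UNIV. Re (G$j$j))"
    using prod_UNIV_split_at[of "\<lambda>j. Re (G$j$j)" i] r by simp
  finally show ?thesis .
qed

text \<open>Induction on the set \<open>T\<close> of indices whose rows are not yet unit rows.\<close>

lemma pos_def_factorization_hadamard_aux:
  fixes G :: "complex^'n^'n"
  assumes "finite T" "pos_def G" "\<And>j k. j \<notin> T \<Longrightarrow> G$j$k = (if j = k then 1 else 0)"
  shows "\<exists>(W::complex^'n^'n) d. G = W ** ctrans W \<and> det G = of_real d \<and> 0 < d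
           \<and> d \<le> (\<Prod>j\<in>UNIV. Re (G$j$j))"
  using assms
proof (induction T arbitrary: G rule: finite_induct)
  case empty
  then have "G = mat 1"
    by (simp add: vec_eq_iff mat_def)
  moreover have "(1::real) \<le> (\<Prod>j\<in>UNIV. Re (mat 1 $j$j :: complex))"
    by (simp add: mat_def)
  ultimately show ?case
    by (intro exI[where x="mat 1"] exI[where x="1::real"]) simp
next
  case (insert i T)
  have herm: "hermitian G"
    using insert.prems(1) by (simp add: pos_def_def)
  define r where "r = Re (G$i$i)"
  have r: "G$i$i = of_real r" "r > 0"
    using hermitian_diag_real[OF herm, of i] pos_def_diag_pos[OF insert.prems(1), of i]
    by (simp_all add: r_def)
  define G2 where "G2 = schur_pivot G i"
  define F where "F = id_with_col (\<chi> a. G$a$i / of_real (sqrt r)) i"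
  have eqG: "G = F ** G2 ** ctrans F" and detF: "det F = of_real (sqrt r)"
    unfolding F_def G2_def by (rule hermitian_pivot_factor[OF herm r])+
  have pd2: "pos_def G2"
    unfolding G2_def by (rule pos_def_schur_pivot[OF insert.prems(1)])
  have unit2: "G2$j$k = (if j = k then 1 else 0)" if "j \<notin> T" for j k
    unfolding G2_def using insert.prems(2) that by (intro schur_pivot_unit_row[OF herm r]) auto
  obtain W2 :: "complex^'n^'n" and d2 where W2: "G2 = W2 ** ctrans W2" "det G2 = of_real d2"
      "0 < d2" "d2 \<le> (\<Prod>j\<in>UNIV. Re (G2$j$j))"
    using insert.IH[OF pd2 unit2] by blast
  have "G = (F ** W2) ** ctrans (F ** W2)"
    using eqG W2(1) by (simp add: ctrans_mult matrix_mul_assoc)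
  moreover have "det G = of_real (r * d2)"
    using r by (simp add: eqG det_mul det_ctrans detF W2(2) flip: of_real_mult)
  moreover have "0 < r * d2"
    using r W2 by simp
  moreover have "r * d2 \<le> (\<Prod>j\<in>UNIV. Re (G$j$j))"
  proof -
    have "r * d2 \<le> r * (\<Prod>j\<in>UNIV. Re (G2$j$j))"
      using W2(4) r(2) by (simp add: mult_left_mono)
    also have "\<dots> \<le> (\<Prod>j\<in>UNIV. Re (G$j$j))"
      unfolding G2_def by (rule schur_pivot_prod_diag_le[OF insert.prems(1) r(1)])
    finally show ?thesis .
  qed
  ultimately show ?case
    by blast
qed

lemma pos_def_factorization_hadamard:
  fixes G :: "complex^'n^'n"
  assumes "pos_def G"
  shows "\<exists>(W::complex^'n^'n) d. G = W ** ctrans W \<and> det G = of_real d \<and> 0 < d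
           \<and> d \<le> (\<Prod>j\<in>UNIV. Re (G$j$j))"
  using pos_def_factorization_hadamard_aux[of UNIV G] assms by simp

section \<open>Log-determinant and trace inequalities\<close>

lemma ln_det_le_trace_minus_dim:
  fixes G :: "complex^'n^'n"
  assumes "pos_def G"
  shows "ln (Re (det G)) \<le> Re (trace G) - real CARD('n)"
proof -
  obtain d where Wd: "det G = of_real d" "0 < d"
      "d \<le> (\<Prod>j\<in>UNIV. Re (G$j$j))"
    using pos_def_factorization_hadamard[OF assms] by blast
  have "(\<Prod>j\<in>UNIV. Re (G$j$j)) \<le> (\<Prod>j\<in>UNIV. exp (Re (G$j$j) - 1))"
    by (rule prod_mono)
      (use psd_diag_nonneg[OF pos_def_imp_psd[OF assms]]
        exp_ge_add_one_self[of "Re (G$j$j) - 1" for j] in auto)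
  also have "\<dots> = exp (\<Sum>j\<in>UNIV. Re (G$j$j) - 1)"
    by (simp add: exp_sum)
  also have "(\<Sum>j\<in>UNIV. Re (G$j$j) - 1) = Re (trace G) - real CARD('n)"
    by (simp add: trace_def sum_subtractf)
  finally have "d \<le> exp (Re (trace G) - real CARD('n))"
    using Wd(3) by linarith
  then have "ln d \<le> Re (trace G) - real CARD('n)"
    using Wd(2) by (metis ln_exp ln_le_cancel_iff exp_gt_zero)
  then show ?thesis
    using Wd(1) by simp
qed

lemma pos_def_congruence:
  fixes B M :: "complex^'n^'n"
  assumes pd: "pos_def B" and M: "invertible M"
  shows "pos_def (M ** B ** ctrans M)"
  unfolding pos_def_def
proof (intro conjI allI impI)
  show "hermitian (M ** B ** ctrans M)"
    using hermitian_congruence[of B "ctrans M"] pd by (simp add: pos_def_def)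
next
  fix w :: "complex^'n"
  assume w: "w \<noteq> 0"
  obtain N where "M ** N = mat 1"
    using M unfolding invertible_def by blast
  then have NM: "ctrans N ** ctrans M = mat 1"
    by (simp flip: ctrans_mult)
  have "ctrans M *v w \<noteq> 0"
  proof
    assume "ctrans M *v w = 0"
    then have "(ctrans N ** ctrans M) *v w = 0"
      by (simp flip: matrix_vector_mul_assoc)
    then show False
      using w NM by simp
  qed
  then show "0 < Re (quad_form (M ** B ** ctrans M) w)"
    using pd quad_form_congruence[of "ctrans M" B w] by (simp add: pos_def_def)
qed

text \<open>With \<open>B = W W\<^sup>H\<close>, apply the previous lemma to \<open>W\<^sup>-\<^sup>1 B' W\<^sup>-\<^sup>H\<close>.\<close>

lemma ln_det_le_tangent:
  fixes B B' :: "complex^'n^'n"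
  assumes pdB: "pos_def B" and pdB': "pos_def B'"
  shows "ln (Re (det B')) \<le> ln (Re (det B)) + Re (trace (matrix_inv B ** (B' - B)))"
proof -
  obtain W :: "complex^'n^'n" and d where Wd: "B = W ** ctrans W" "det B = of_real d" "0 < d"
    using pos_def_factorization_hadamard[OF pdB] by blast
  obtain d' where Wd': "det B' = of_real d'" "0 < d'"
    using pos_def_factorization_hadamard[OF pdB'] by blast
  have dB: "det B = det W * cnj (det W)"
    using Wd(1) by (simp add: det_mul det_ctrans)
  then have "invertible W"
    using Wd(2,3) by (auto simp: invertible_det_nz)
  then obtain M where M: "W ** M = mat 1" "M ** W = mat 1"
    unfolding invertible_def by blast
  define C where "C = M ** B' ** ctrans M"
  have "invertible M"
    using M unfolding invertible_def by blast
  then have pdC: "pos_def C"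
    unfolding C_def by (rule pos_def_congruence[OF pdB'])
  have "det M * det W = 1"
    using M(2) by (metis det_I det_mul)
  moreover have "det C * det B = det B' * ((det M * det W) * cnj (det M * det W))"
    by (simp add: C_def det_mul det_ctrans dB mult_ac)
  ultimately have "det C * det B = det B'"
    by simp
  then have dC: "Re (det C) = d' / d"
    using Wd(2,3) Wd'(1)
    by (metis Re_complex_of_real nonzero_eq_divide_eq of_real_divide of_real_eq_0_iff order_less_irrefl)
  have inv: "matrix_inv B = ctrans M ** M"
  proof (rule matrix_inv_eqI)
    have "(ctrans M ** M) ** B = ctrans M ** (M ** W) ** ctrans W"
      using Wd(1) by (simp add: matrix_mul_assoc)
    also have "\<dots> = mat 1"
      using M by (simp add: ctrans_mult[symmetric])
    finally show "B ** (ctrans M ** M) = mat 1"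
      using matrix_left_right_inverse by blast
  qed
  have "matrix_inv B ** B = mat 1"
    using inv Wd(1) M
    by (simp add: matrix_mul_assoc) (metis ctrans_mult ctrans_mat1 matrix_mul_assoc matrix_mul_lid)
  moreover have "trace C = trace (matrix_inv B ** B')"
    unfolding inv C_def by (metis matrix_mul_assoc trace_mul_sym)
  ultimately have "Re (trace (matrix_inv B ** (B' - B))) = Re (trace C) - real CARD('n)"
    by (simp add: matrix_diff_ldistrib trace_sub trace_I)
  moreover have "ln (d' / d) \<le> Re (trace C) - real CARD('n)"
    using ln_det_le_trace_minus_dim[OF pdC] dC by simp
  ultimately show ?thesis
    using Wd Wd' by (simp add: ln_div)
qed

lemma nonneg_if_nonneg_add_eps_mult:
  fixes a b :: real
  assumes "\<And>e. e > 0 \<Longrightarrow> 0 \<le> a + e * b"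
  shows "0 \<le> a"
proof (rule ccontr)
  assume a: "\<not> 0 \<le> a"
  define e where "e = - a / (2 * (\<bar>b\<bar> + 1))"
  have e: "e > 0"
    using a by (simp add: e_def field_simps)
  have "e * b \<le> e * \<bar>b\<bar>"
    using e by (simp add: mult_left_mono)
  also have "e * \<bar>b\<bar> = (-a) * (\<bar>b\<bar> / (2 * (\<bar>b\<bar> + 1)))"
    by (simp add: e_def field_simps)
  also have "\<dots> \<le> (-a) * (1/2)"
    using a by (intro mult_left_mono) (auto simp: field_simps)
  finally have "a + e * b < 0"
    using a by linarith
  then show False
    using assms[OF e] by linarith
qed

lemma trace_congruence_psd_nonneg: "psd Y \<Longrightarrow> 0 \<le> Re (trace (ctrans W ** Y ** W))"
proof -
  assume Y: "psd Y"
  have "(ctrans W ** Y ** W)$a$a = quad_form Y (W *v axis a 1)" for a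
    using quad_form_congruence[of W Y "axis a 1"] quad_form_axis[of "ctrans W ** Y ** W" a] by simp
  then show ?thesis
    using Y by (simp add: trace_def psd_iff_quad_form sum_nonneg)
qed

text \<open>The perturbation \<open>X + e I\<close> is positive definite, hence factors as \<open>W W\<^sup>H\<close>.\<close>

lemma trace_mult_psd_nonneg:
  fixes X Y :: "complex^'n^'n"
  assumes X: "psd X" and Y: "psd Y"
  shows "0 \<le> Re (trace (X ** Y))"
proof (rule nonneg_if_nonneg_add_eps_mult)
  fix e :: real
  assume e: "e > 0"
  obtain W :: "complex^'n^'n" where W: "X + e *\<^sub>R mat 1 = W ** ctrans W"
    using pos_def_factorization_hadamard[OF pos_def_psd_add_mat1[OF X e]] by blast
  have "trace ((X + e *\<^sub>R mat 1) ** Y) = trace (ctrans W ** Y ** W)"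
    unfolding W by (metis matrix_mul_assoc trace_mul_sym)
  moreover have "(X + e *\<^sub>R mat 1) ** Y = X ** Y + e *\<^sub>R Y"
    by (simp add: matrix_add_rdistrib flip: scalar_matrix_assoc)
  ultimately have "trace (X ** Y) + trace (e *\<^sub>R Y) = trace (ctrans W ** Y ** W)"
    by (simp add: trace_add)
  then have "Re (trace (X ** Y)) + e * Re (trace Y) = Re (trace (ctrans W ** Y ** W))"
    by (metis Re_trace_scaleR plus_complex.sel(1))
  then show "0 \<le> Re (trace (X ** Y)) + e * Re (trace Y)"
    using trace_congruence_psd_nonneg[OF Y] by simp
qed

lemma inner_psd_nonneg: "psd X \<Longrightarrow> psd Y \<Longrightarrow> 0 \<le> inner X Y"
  using trace_mult_psd_nonneg[of X Y] by (simp add: inner_eq_Re_trace psd_def hermitian_def)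

lemma psd_entry_norm_sq_le:
  fixes X :: "complex^'n^'n"
  assumes psd: "psd X"
  shows "(cmod (X$i$j))^2 \<le> Re (X$i$i) * Re (X$j$j)"
proof -
  have herm: "hermitian X"
    using psd by (simp add: psd_def)
  have q: "0 \<le> Re (quad_form X v)" for v
    using psd by (simp add: psd_iff_quad_form)
  define p where "p = Re (X$i$i)"
  define r where "r = Re (X$j$j)"
  define z where "z = X$j$i"
  have Xii: "X$i$i = of_real p" and Xjj: "X$j$j = of_real r"
    using hermitian_diag_real[OF herm] by (simp_all add: p_def r_def)
  have Xij: "X$i$j = cnj z"
    using hermitian_entry[OF herm, of j i] by (simp add: z_def)
  have p0: "0 \<le> p" and r0: "0 \<le> r"
    using psd_diag_nonneg[OF psd] by (simp_all add: p_def r_def)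
  have cz: "(cmod z)^2 = (Re z)^2 + (Im z)^2"
    by (simp add: cmod_power2)
  have two: "quad_form X (axis i a + axis j b) =
      cnj a * (X$i$i * a) + cnj b * (X$j$j * b) + cnj a * (X$i$j * b) + cnj b * (X$j$i * a)" for a b
    unfolding quad_form_sum_vectors by (simp add: quad_form_def)
  show ?thesis
  proof (cases "i = j")
    case True
    then show ?thesis
      using Xii p0 by (simp add: power2_eq_square)
  next
    case False
    show ?thesis
    proof (cases "r > 0")
      case True
      have "Re (quad_form X (axis i (of_real r) + axis j (- z))) = r * (r * p - (cmod z)^2)"
        unfolding two Xii Xjj Xij z_def[symmetric] cz
        by (simp add: algebra_simps power2_eq_square)
      then have "0 \<le> r * (r * p - (cmod z)^2)"
        using q by metis
      then have "(cmod z)^2 \<le> r * p"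
        using True by (simp add: zero_le_mult_iff)
      then show ?thesis
        using Xij by (simp add: p_def r_def mult.commute)
    next
      case False
      then have r: "r = 0"
        using r0 by simp
      have "z = 0"
      proof (rule ccontr)
        assume z: "z \<noteq> 0"
        then have zp: "(cmod z)^2 > 0"
          by simp
        define t where "t = (p + 1) / (2 * (cmod z)^2)"
        have "Re (quad_form X (axis i 1 + axis j (- (of_real t * z)))) = p - 2 * t * (cmod z)^2"
          unfolding two Xii Xjj Xij z_def[symmetric] cz r
          by (simp add: algebra_simps power2_eq_square)
        also have "\<dots> = -1"
          using zp by (simp add: t_def field_simps)
        finally show False
          using q by (metis neg_0_le_iff_le not_one_le_zero)
      qed
      then show ?thesis
        using Xij r p0 by (simp add: r_def)
    qed
  qed
qed

lemma psd_norm_le_trace: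
  fixes X :: "complex^'n^'n"
  assumes "psd X"
  shows "norm X \<le> Re (trace X)"
proof -
  have "(norm X)^2 \<le> (\<Sum>i\<in>UNIV. \<Sum>j\<in>UNIV. Re (X$i$i) * Re (X$j$j))"
    unfolding norm_sq_eq_sum_entries by (intro sum_mono psd_entry_norm_sq_le[OF assms])
  also have "\<dots> = (Re (trace X))^2"
    by (simp add: trace_def power2_eq_square sum_product)
  finally show ?thesis
    using psd_trace_nonneg[OF assms] by (rule power2_le_imp_le)
qed

section \<open>The feasible sets\<close>

lemma sum_UNIV_prod:
  "(\<Sum>p\<in>(UNIV::('k::finite \<times> 't::finite) set). f p) = (\<Sum>k\<in>UNIV. \<Sum>a\<in>UNIV. f (k, a))"
  by (simp add: sum.cartesian_product UNIV_Times_UNIV[symmetric] del: UNIV_Times_UNIV)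

lemma trace_eq_sum_blk:
  "trace (X :: complex^('k::finite \<times> 't::finite)^('k \<times> 't)) = (\<Sum>k\<in>UNIV. trace (blk X k))"
  by (simp add: trace_def sum_UNIV_prod blk_def)

lemma blk_add: "blk (A + B) k = blk A k + blk B k"
  by (simp add: blk_def vec_eq_iff)

lemma blk_scaleR: "blk (c *\<^sub>R A) k = c *\<^sub>R blk A k"
  by (simp add: blk_def vec_eq_iff)

lemma blk_zero: "blk 0 k = 0"
  by (simp add: blk_def vec_eq_iff)

lemma block_diag_add: "block_diag A \<Longrightarrow> block_diag B \<Longrightarrow> block_diag (A + B)"
  by (simp add: block_diag_def)

lemma block_diag_scaleR: "block_diag A \<Longrightarrow> block_diag (c *\<^sub>R A)"
  by (simp add: block_diag_def)

lemma block_diag_mult_vec_nth: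
  fixes X :: "complex^('k::finite \<times> 't::finite)^('k \<times> 't)"
  assumes "block_diag X"
  shows "(X *v v)$(k,a) = (blk X k *v (\<chi> b. v$(k,b)))$a"
proof -
  have "(X *v v)$(k,a) = (\<Sum>l\<in>UNIV. \<Sum>b\<in>UNIV. X$(k,a)$(l,b) * v$(l,b))"
    by (simp add: matrix_vector_mult_def sum_UNIV_prod)
  also have "\<dots> = (\<Sum>l\<in>UNIV. if l = k then (\<Sum>b\<in>UNIV. X$(k,a)$(k,b) * v$(k,b)) else 0)"
    by (rule sum.cong) (use assms in \<open>auto simp: block_diag_def\<close>)
  also have "\<dots> = (blk X k *v (\<chi> b. v$(k,b)))$a"
    by (simp add: matrix_vector_mult_def blk_def)
  finally show ?thesis .
qed

lemma psd_block_diag: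
  fixes X :: "complex^('k::finite \<times> 't::finite)^('k \<times> 't)"
  assumes bd: "block_diag X" and blocks: "\<And>k. psd (blk X k)"
  shows "psd X"
  unfolding psd_iff_quad_form
proof (intro conjI allI)
  show "hermitian X"
    unfolding hermitian_def vec_eq_iff
  proof (intro allI)
    fix p q :: "'k \<times> 't"
    obtain k a l b where pq: "p = (k,a)" "q = (l,b)"
      by fastforce
    show "ctrans X $ p $ q = X $ p $ q"
    proof (cases "k = l")
      case True
      have "hermitian (blk X k)"
        using blocks[of k] by (simp add: psd_def)
      from hermitian_entry[OF this, of b a] show ?thesis
        using True by (simp add: pq blk_def)
    next
      case False
      then show ?thesis
        using bd by (simp add: pq block_diag_def)
    qed
  qed
  fix v :: "complex^('k \<times> 't)"
  have "quad_form X v = (\<Sum>k\<in>UNIV. quad_form (blk X k) (\<chi> b. v$(k,b)))"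
    by (simp add: quad_form_def cdot_def sum_UNIV_prod block_diag_mult_vec_nth[OF bd])
  then show "0 \<le> Re (quad_form X v)"
    using blocks by (simp add: psd_iff_quad_form sum_nonneg)
qed

lemma Xset_eq_Qset: "Xset = Qset 1"
  by (simp add: Xset_def Qset_def)

lemma mem_Qset_iff:
  "Q \<in> Qset P \<longleftrightarrow> block_diag Q \<and> (\<forall>k. psd (blk Q k)) \<and> Re (trace Q) \<le> P"
  by (simp add: Qset_def trace_eq_sum_blk Re_sum)

lemma Qset_psd: "Q \<in> Qset P \<Longrightarrow> psd Q"
  by (simp add: mem_Qset_iff psd_block_diag)

lemma zero_mem_Qset: "0 \<le> P \<Longrightarrow> 0 \<in> Qset P"
  by (simp add: Qset_def block_diag_def blk_zero psd_def hermitian_def vec_eq_iff trace_def)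

lemma convex_Qset: "convex (Qset P :: (complex^('k::finite \<times> 't::finite)^('k \<times> 't)) set)"
proof (rule convexI)
  fix x y :: "complex^('k \<times> 't)^('k \<times> 't)" and u v :: real
  assume x: "x \<in> Qset P" and y: "y \<in> Qset P" and u: "0 \<le> u" and v: "0 \<le> v" and uv: "u + v = 1"
  have "Re (trace (u *\<^sub>R x + v *\<^sub>R y)) = u * Re (trace x) + v * Re (trace y)"
    by (simp add: trace_add)
  also have "\<dots> \<le> u * P + v * P"
    using x y u v by (intro add_mono mult_left_mono) (auto simp: mem_Qset_iff)
  finally show "u *\<^sub>R x + v *\<^sub>R y \<in> Qset P"
    using x y u v uv
    by (auto simp: mem_Qset_iff blk_add blk_scaleR distrib_right[symmetric]
        intro!: block_diag_add block_diag_scaleR psd_add psd_scaleR)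
qed

lemma closed_Qset: "closed (Qset P :: (complex^('k::finite \<times> 't::finite)^('k \<times> 't)) set)"
proof -
  have bd: "closed {X :: complex^('k \<times> 't)^('k \<times> 't). block_diag X}"
    unfolding block_diag_def
    apply (intro closed_Collect_all)
    subgoal for k i l j
      by (cases "k = l") (auto intro!: closed_Collect_eq continuous_intros)
    done
  have blocks: "closed {X :: complex^('k \<times> 't)^('k \<times> 't). \<forall>k. psd (blk X k)}"
    unfolding psd_def hermitian_def ctrans_def blk_def matrix_vector_mult_def
    by (auto intro!: closed_Collect_all closed_Collect_conj closed_Collect_eq closed_Collect_le
        continuous_intros)
  have tr: "closed {X :: complex^('k \<times> 't)^('k \<times> 't). Re (trace X) \<le> P}"
    unfolding trace_def by (auto intro!: closed_Collect_le continuous_intros)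
  have "Qset P = {X :: complex^('k \<times> 't)^('k \<times> 't). block_diag X}
      \<inter> {X. \<forall>k. psd (blk X k)} \<inter> {X. Re (trace X) \<le> P}"
    by (auto simp: mem_Qset_iff)
  then show ?thesis
    by (simp only: closed_Int bd blocks tr)
qed

lemma Xset_norm_le_1: "X \<in> Xset \<Longrightarrow> norm X \<le> 1"
  unfolding Xset_eq_Qset using psd_norm_le_trace Qset_psd mem_Qset_iff by fastforce

text \<open>Positivity of \<open>\<langle>X, Y\<rangle>\<close> gives the diameter bound \<open>2\<close>, not the triangle-inequality bound \<open>4\<close>.\<close>

lemma Xset_dist_sq_le_2: "X \<in> Xset \<Longrightarrow> Y \<in> Xset \<Longrightarrow> (norm (X - Y))^2 \<le> 2"
proof -
  assume X: "X \<in> Xset" and Y: "Y \<in> Xset"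
  have "(norm (X - Y))^2 = (norm X)^2 + (norm Y)^2 - 2 * inner X Y"
    by (simp add: power2_norm_eq_inner inner_diff_left inner_diff_right inner_commute)
  moreover have "(norm X)^2 \<le> 1" "(norm Y)^2 \<le> 1"
    using Xset_norm_le_1[OF X] Xset_norm_le_1[OF Y] by (simp_all add: power_le_one)
  moreover have "0 \<le> inner X Y"
    using X Y by (intro inner_psd_nonneg Qset_psd) (auto simp: Xset_eq_Qset)
  ultimately show ?thesis
    by linarith
qed

lemma proj_is_arg_min:
  fixes Y :: "complex^('k::finite \<times> 't::finite)^('k \<times> 't)"
  shows "is_arg_min (\<lambda>X. (frob (X - Y))\<^sup>2) (\<lambda>X. X \<in> Xset) (proj Y)"
proof -
  have "Xset \<noteq> {}"
    using zero_mem_Qset[of 1] by (auto simp: Xset_eq_Qset)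
  then obtain x where x: "x \<in> Xset" "\<And>y. y \<in> Xset \<Longrightarrow> dist Y x \<le> dist Y y"
    using distance_attains_inf[OF closed_Qset[of 1], where a=Y] unfolding Xset_eq_Qset by blast
  have "is_arg_min (\<lambda>X. (frob (X - Y))\<^sup>2) (\<lambda>X. X \<in> Xset) x"
    unfolding is_arg_min_def
  proof (intro conjI notI x(1))
    assume "\<exists>y. y \<in> Xset \<and> (frob (y - Y))\<^sup>2 < (frob (x - Y))\<^sup>2"
    then obtain y where y: "y \<in> Xset" "(frob (y - Y))\<^sup>2 < (frob (x - Y))\<^sup>2"
      by blast
    have "(frob (x - Y))\<^sup>2 \<le> (frob (y - Y))\<^sup>2"
      using x(2)[OF y(1)] by (simp add: dist_norm norm_eq_frob[symmetric] norm_minus_commute)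
    then show False
      using y(2) by simp
  qed
  then show ?thesis
    unfolding proj_def arg_min_def by (rule someI)
qed

lemma proj_mem_Xset: "proj (Y :: complex^('k::finite \<times> 't::finite)^('k \<times> 't)) \<in> Xset"
  using proj_is_arg_min[of Y] by (simp add: is_arg_min_def)

lemma proj_nonexpansive:
  fixes Y Z :: "complex^('k::finite \<times> 't::finite)^('k \<times> 't)"
  assumes Z: "Z \<in> Xset"
  shows "norm (proj Y - Z) \<le> norm (Y - Z)"
proof -
  let ?P = "proj Y"
  have Pmin: "\<forall>z\<in>Xset. dist Y ?P \<le> dist Y z"
  proof
    fix z :: "complex^('k \<times> 't)^('k \<times> 't)"
    assume "z \<in> Xset"
    then have "\<not> (frob (z - Y))\<^sup>2 < (frob (?P - Y))\<^sup>2"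
      using proj_is_arg_min[of Y] by (auto simp: is_arg_min_def)
    then have "norm (?P - Y) \<le> norm (z - Y)"
      by (simp add: norm_eq_frob[symmetric] not_less power_mono_iff)
    then show "dist Y ?P \<le> dist Y z"
      by (simp add: dist_norm norm_minus_commute)
  qed
  have "inner (Y - ?P) (Z - ?P) \<le> 0"
    using any_closest_point_dot[OF convex_Qset closed_Qset, of ?P 1 Z Y] proj_mem_Xset[of Y] Z Pmin
    unfolding Xset_eq_Qset by blast
  moreover have "(norm (Y - Z))^2 = (norm (Y - ?P))^2 + (norm (Z - ?P))^2 - 2 * inner (Y - ?P) (Z - ?P)"
    by (simp add: power2_norm_eq_inner inner_diff_left inner_diff_right inner_commute)
  ultimately have "(norm (Z - ?P))^2 \<le> (norm (Y - Z))^2"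
    using zero_le_power2[of "norm (Y - ?P)"] by linarith
  then have "norm (Z - ?P) \<le> norm (Y - Z)"
    by (simp add: power_mono_iff)
  then show ?thesis
    by (simp add: norm_minus_commute)
qed

text \<open>The inverse of \<open>Qmap\<close> is \<open>Q \<mapsto> \<beta> Q\<close> with \<open>\<beta> = (P\<^sub>c + P\<^sub>m\<^sub>a\<^sub>x) / (P\<^sub>m\<^sub>a\<^sub>x (P\<^sub>c + tr Q))\<close>.\<close>

lemma Qmap_surj:
  fixes Q :: "complex^('k::finite \<times> 't::finite)^('k \<times> 't)"
  assumes Pc: "Pc > 0" and Pmax: "Pmax > 0" and Q: "Q \<in> Qset Pmax"
  shows "\<exists>Z\<in>Xset. Qmap Pc Pmax Z = Q"
proof -
  define q where "q = Re (trace Q)"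
  have q0: "0 \<le> q" and qP: "q \<le> Pmax"
    using Q psd_trace_nonneg[OF Qset_psd[OF Q]] by (simp_all add: q_def mem_Qset_iff)
  define \<beta> where "\<beta> = (Pc + Pmax) / (Pmax * (Pc + q))"
  have \<beta>0: "\<beta> > 0"
    using Pc Pmax q0 by (simp add: \<beta>_def)
  define Z where "Z = \<beta> *\<^sub>R Q"
  have trZ: "Re (trace Z) = \<beta> * q"
    by (simp add: Z_def q_def)
  have "(Pc + Pmax) * q \<le> Pmax * (Pc + q)"
    using qP Pc by (simp add: algebra_simps)
  then have "\<beta> * q \<le> 1"
    using Pc Pmax q0 by (simp add: \<beta>_def divide_le_eq)
  then have "Z \<in> Xset"
    using Q \<beta>0 trZ
    by (simp add: Xset_eq_Qset mem_Qset_iff Z_def blk_scaleR block_diag_scaleR psd_scaleR)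
  moreover have "Qmap Pc Pmax Z = Q"
  proof -
    have D: "Pc + q > 0"
      using Pc q0 by simp
    have nz: "Pc * Pmax + Pmax * q \<noteq> 0"
      using Pmax D by (metis distrib_left mult.commute mult_eq_0_iff order_less_irrefl)
    have c: "Pc + Pmax * (1 - \<beta> * q) = (Pc + Pmax) * Pc / (Pc + q)"
      using Pmax D nz by (simp add: \<beta>_def field_simps)
    have "Pc * Pmax / (Pc + Pmax * (1 - \<beta> * q)) * \<beta> = Pc * Pmax / ((Pc + Pmax) * Pc / (Pc + q)) * \<beta>"
      by (simp only: c)
    also have "\<dots> = 1"
      using Pc Pmax D by (simp add: \<beta>_def divide_simps)
    finally have scale: "Pc * Pmax / (Pc + Pmax * (1 - \<beta> * q)) * \<beta> = 1" .
    have "Qmap Pc Pmax Z = (Pc * Pmax / (Pc + Pmax * (1 - \<beta> * q)) * \<beta>) *\<^sub>R Q"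
      unfolding Qmap_def trZ by (simp add: Z_def)
    then show ?thesis
      unfolding scale by simp
  qed
  ultimately show ?thesis
    by blast
qed

section \<open>Concavity of the normalised energy efficiency\<close>

lemma rate_le_tangent:
  fixes H :: "complex^'c^'r" and Q Q' :: "complex^'c^'c"
  assumes "psd Q" "psd Q'"
  shows "rate H Q' \<le> rate H Q + Re (trace (Amat H Q ** (Q' - Q)))"
proof -
  define B where "B = mat 1 + H ** Q ** ctrans H"
  define B' where "B' = mat 1 + H ** Q' ** ctrans H"
  have "trace (matrix_inv B ** (B' - B)) = trace ((matrix_inv B ** (H ** (Q' - Q))) ** ctrans H)"
    by (simp add: B_def B'_def matrix_diff_ldistrib matrix_diff_rdistrib matrix_mul_assoc)
  also have "\<dots> = trace (ctrans H ** (matrix_inv B ** (H ** (Q' - Q))))"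
    by (rule trace_mul_sym)
  also have "\<dots> = trace (Amat H Q ** (Q' - Q))"
    by (simp add: Amat_def B_def matrix_mul_assoc)
  finally show ?thesis
    using ln_det_le_tangent[of B B'] assms
    by (simp add: rate_def B_def B'_def pos_def_mat1_add_psd psd_congruence)
qed

lemma Re_trace_ctrans_mult_hermitian:
  fixes A Z :: "complex^'n^'n"
  assumes "hermitian Z"
  shows "Re (trace (ctrans A ** Z)) = Re (trace (A ** Z))"
proof -
  have "trace (ctrans A ** Z) = trace (ctrans A ** ctrans Z)"
    using assms by (simp add: hermitian_def)
  also have "\<dots> = cnj (trace (Z ** A))"
    by (simp add: ctrans_mult[symmetric] trace_ctrans)
  also have "\<dots> = cnj (trace (A ** Z))"
    using trace_mul_sym[of Z A] by simp
  finally show ?thesis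
    by simp
qed

lemma EE_Qmap_eq:
  assumes "Pc > 0" "Pmax > 0" "Re (trace X) \<le> 1"
  shows "EE Pc H (Qmap Pc Pmax X)
    = rate H (Qmap Pc Pmax X) * (Pc + Pmax * (1 - Re (trace X))) / (Pc * (Pc + Pmax))"
proof -
  define t where "t = Re (trace X)"
  define c where "c = Pc + Pmax * (1 - t)"
  have c: "c > 0"
    using assms by (simp add: c_def t_def add_pos_nonneg)
  have "Re (trace (Qmap Pc Pmax X)) = Pc * Pmax / c * t"
    by (simp add: Qmap_def c_def t_def)
  then have "Pc + Re (trace (Qmap Pc Pmax X)) = Pc * (c + Pmax * t) / c"
    using c by (simp add: field_simps)
  also have "c + Pmax * t = Pc + Pmax"
    by (simp add: c_def algebra_simps)
  finally have "Pc + Re (trace (Qmap Pc Pmax X)) = Pc * (Pc + Pmax) / c" .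
  then show ?thesis
    unfolding EE_def t_def[symmetric] c_def[symmetric] by simp
qed

lemma inner_grad_eq:
  fixes Pc Pmax :: real and H :: "complex^'c^'r" and X Y :: "complex^'c^'c"
  assumes "hermitian (Y - X)"
  defines "Q \<equiv> Qmap Pc Pmax X"
  defines "A \<equiv> Amat H Q"
  shows "inner (grad Pc Pmax H X) (Y - X) = Pmax / (Pc + Pmax) *
    (Re (trace (A ** Y)) - Re (trace (A ** X))
      + (Re (trace (A ** Q)) - rate H Q) / Pc * (Re (trace Y) - Re (trace X)))"
proof -
  define g where "g = (Re (trace (A ** Q)) - rate H Q) / Pc"
  have "grad Pc Pmax H X = (Pmax / (Pc + Pmax)) *\<^sub>R (A + g *\<^sub>R mat 1)"
    by (simp add: grad_def Let_def Q_def A_def g_def)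
  then have "inner (grad Pc Pmax H X) (Y - X) =
      Pmax / (Pc + Pmax) * (Re (trace (ctrans A ** (Y - X))) + g * Re (trace (Y - X)))"
    by (simp add: inner_eq_Re_trace matrix_add_rdistrib flip: scalar_matrix_assoc)
      (simp add: trace_add)
  then show ?thesis
    unfolding Re_trace_ctrans_mult_hermitian[OF assms(1)]
    by (simp add: matrix_diff_ldistrib trace_sub g_def)
qed

text \<open>The linearisation of \<open>log det\<close> at \<open>Q(X)\<close> is transported through \<open>Q(X) = a(X) X\<close>,
  using \<open>a(X) c(X) = P\<^sub>c P\<^sub>m\<^sub>a\<^sub>x\<close> for the denominator \<open>c(X) = P\<^sub>c + P\<^sub>m\<^sub>a\<^sub>x (1 - tr X)\<close>
  of the utility.\<close>

lemma EE_Qmap_le_tangent: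
  fixes H :: "complex^'c^'r" and X Y :: "complex^'c^'c"
  assumes Pc: "Pc > 0" and Pmax: "Pmax > 0"
    and X: "psd X" "Re (trace X) \<le> 1" and Y: "psd Y" "Re (trace Y) \<le> 1"
  shows "EE Pc H (Qmap Pc Pmax Y) \<le> EE Pc H (Qmap Pc Pmax X) + inner (grad Pc Pmax H X) (Y - X)"
proof -
  define tX tY where "tX = Re (trace X)" and "tY = Re (trace Y)"
  define cX cY where "cX = Pc + Pmax * (1 - tX)" and "cY = Pc + Pmax * (1 - tY)"
  define aX aY where "aX = Pc * Pmax / cX" and "aY = Pc * Pmax / cY"
  define QX QY where "QX = Qmap Pc Pmax X" and "QY = Qmap Pc Pmax Y"
  define A where "A = Amat H QX"
  define RX RY where "RX = rate H QX" and "RY = rate H QY"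
  define bX bY where "bX = Re (trace (A ** X))" and "bY = Re (trace (A ** Y))"
  define g where "g = (Re (trace (A ** QX)) - RX) / Pc"
  have cX: "cX > 0" and cY: "cY > 0"
    using X Y Pc Pmax by (simp_all add: cX_def cY_def tX_def tY_def add_pos_nonneg)
  have QX: "QX = aX *\<^sub>R X" and QY: "QY = aY *\<^sub>R Y"
    by (simp_all add: QX_def QY_def Qmap_def aX_def aY_def cX_def cY_def tX_def tY_def)
  have aX: "aX * cX = Pc * Pmax" and aY: "aY * cY = Pc * Pmax"
    using cX cY by (simp_all add: aX_def aY_def)
  have "0 \<le> aX" "0 \<le> aY"
    using cX cY Pc Pmax by (simp_all add: aX_def aY_def)
  then have "psd QX" "psd QY"
    using X(1) Y(1) by (simp_all add: QX QY psd_scaleR)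
  then have "RY \<le> RX + Re (trace (A ** (QY - QX)))"
    using rate_le_tangent by (simp add: RX_def RY_def A_def)
  also have "Re (trace (A ** (QY - QX))) = aY * bY - aX * bX"
    by (simp add: QX QY bX_def bY_def matrix_diff_ldistrib trace_sub matrix_scalar_ac
        flip: scalar_matrix_assoc)
  finally have RY: "RY \<le> RX + aY * bY - aX * bX"
    by simp
  have gX: "Pc * g = aX * bX - RX"
    using Pc by (simp add: g_def QX bX_def matrix_scalar_ac flip: scalar_matrix_assoc)
  have "RY * cY \<le> (RX + aY * bY - aX * bX) * cY"
    using RY cY by (simp add: mult_right_mono)
  also have "\<dots> = RX * cX + Pc * Pmax * (bY - bX + g * (tY - tX))"
  proof -
    have cY_eq: "cY = cX - Pmax * (tY - tX)"
      by (simp add: cX_def cY_def algebra_simps)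
    have "(RX + aY * bY - aX * bX) * cY = RX * cY + (aY * cY) * bY - aX * bX * cY"
      by (simp add: algebra_simps)
    also have "\<dots> = RX * (cX - Pmax * (tY - tX)) + Pc * Pmax * bY - aX * bX * (cX - Pmax * (tY - tX))"
      unfolding aY by (simp only: cY_eq)
    also have "\<dots> = RX * cX + Pc * Pmax * bY - (aX * cX) * bX + Pmax * (tY - tX) * (aX * bX - RX)"
      by (simp add: algebra_simps)
    finally show ?thesis
      unfolding aX gX[symmetric] by (simp add: algebra_simps)
  qed
  finally have "RY * cY / (Pc * (Pc + Pmax)) \<le> (RX * cX + Pc * Pmax * (bY - bX + g * (tY - tX))) / (Pc * (Pc + Pmax))"
    using Pc Pmax by (simp add: divide_right_mono)
  also have "\<dots> = RX * cX / (Pc * (Pc + Pmax)) + Pmax / (Pc + Pmax) * (bY - bX + g * (tY - tX))"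
    using Pc by (simp add: add_divide_distrib)
  moreover have "hermitian (Y - X)"
    using X(1) Y(1) by (simp add: psd_def hermitian_def)
  ultimately show ?thesis
    using X(2) Y(2) Pc Pmax
    by (simp add: EE_Qmap_eq inner_grad_eq RX_def RY_def cX_def cY_def tX_def tY_def
        QX_def QY_def A_def bX_def bY_def g_def)
qed

section \<open>Online projected gradient ascent\<close>

lemma projected_step_inner_le:
  fixes x x' z v :: "'a::real_inner"
  assumes \<gamma>: "\<gamma> > 0" and proj: "norm (x' - z) \<le> norm (x + \<gamma> *\<^sub>R v - z)" and v: "norm v \<le> V"
  shows "inner v (z - x) \<le> ((norm (x - z))\<^sup>2 - (norm (x' - z))\<^sup>2) / (2 * \<gamma>) + \<gamma> * V\<^sup>2 / 2"
proof -
  have "(norm (x' - z))\<^sup>2 \<le> (norm ((x - z) + \<gamma> *\<^sub>R v))\<^sup>2"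
    using proj by (simp add: power_mono algebra_simps)
  also have "\<dots> = (norm (x - z))\<^sup>2 + 2 * \<gamma> * inner v (x - z) + \<gamma>\<^sup>2 * (norm v)\<^sup>2"
    unfolding power2_norm_eq_inner
    by (simp add: inner_add_left inner_add_right inner_commute power2_eq_square algebra_simps)
  also have "\<dots> \<le> (norm (x - z))\<^sup>2 + 2 * \<gamma> * inner v (x - z) + \<gamma>\<^sup>2 * V\<^sup>2"
    using v by (simp add: mult_left_mono power_mono)
  finally have "2 * \<gamma> * inner v (z - x) \<le> (norm (x - z))\<^sup>2 - (norm (x' - z))\<^sup>2 + \<gamma>\<^sup>2 * V\<^sup>2"
    by (simp add: inner_diff_right algebra_simps)
  then show ?thesis
    using \<gamma> by (simp add: field_simps power2_eq_square)
qed

lemma weighted_telescoping_le: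
  fixes D \<gamma> :: "nat \<Rightarrow> real"
  assumes D: "\<And>n. n \<ge> 1 \<Longrightarrow> 0 \<le> D n \<and> D n \<le> R"
    and pos: "\<And>n. n \<ge> 1 \<Longrightarrow> \<gamma> n > 0"
    and mono: "\<And>m n. 1 \<le> m \<Longrightarrow> m \<le> n \<Longrightarrow> \<gamma> n \<le> \<gamma> m"
    and T: "T \<ge> 1"
  shows "(\<Sum>n=1..T. (D n - D (Suc n)) / (2 * \<gamma> n)) \<le> (R - D (Suc T)) / (2 * \<gamma> T)"
  using T
proof (induction T rule: nat_induct_at_least)
  case base
  then show ?case
    using D[of 1] pos[of 1] by (simp add: divide_right_mono)
next
  case (Suc T)
  have \<gamma>T: "\<gamma> T > 0" "\<gamma> (Suc T) \<le> \<gamma> T" and \<gamma>T1: "\<gamma> (Suc T) > 0"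
    using pos mono[of T "Suc T"] Suc.hyps by auto
  have "R - D (Suc T) \<ge> 0"
    using D[of "Suc T"] by simp
  then have "(R - D (Suc T)) / (2 * \<gamma> T) \<le> (R - D (Suc T)) / (2 * \<gamma> (Suc T))"
    using \<gamma>T \<gamma>T1 by (intro divide_left_mono) auto
  then have "(\<Sum>n=1..Suc T. (D n - D (Suc n)) / (2 * \<gamma> n))
      \<le> (R - D (Suc T)) / (2 * \<gamma> (Suc T)) + (D (Suc T) - D (Suc (Suc T))) / (2 * \<gamma> (Suc T))"
    using Suc.IH Suc.hyps by simp
  also have "\<dots> = (R - D (Suc (Suc T))) / (2 * \<gamma> (Suc T))"
    by (simp add: add_divide_distrib[symmetric])
  finally show ?case .
qed

lemma online_gradient_ascent_regret:
  fixes X V :: "nat \<Rightarrow> 'a::real_inner" and u :: "nat \<Rightarrow> 'a \<Rightarrow> real" and \<gamma> :: "nat \<Rightarrow> real"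
  assumes diam: "\<And>x y. x \<in> S \<Longrightarrow> y \<in> S \<Longrightarrow> (norm (x - y))\<^sup>2 \<le> R"
    and X: "\<And>n. n \<ge> 1 \<Longrightarrow> X n \<in> S"
    and step: "\<And>n z. n \<ge> 1 \<Longrightarrow> z \<in> S \<Longrightarrow> norm (X (Suc n) - z) \<le> norm (X n + \<gamma> n *\<^sub>R V n - z)"
    and V: "\<And>n. n \<ge> 1 \<Longrightarrow> norm (V n) \<le> V0"
    and tangent: "\<And>n z. n \<ge> 1 \<Longrightarrow> z \<in> S \<Longrightarrow> u n z - u n (X n) \<le> inner (V n) (z - X n)"
    and pos: "\<And>n. n \<ge> 1 \<Longrightarrow> \<gamma> n > 0"
    and mono: "\<And>m n. 1 \<le> m \<Longrightarrow> m \<le> n \<Longrightarrow> \<gamma> n \<le> \<gamma> m"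
    and z: "z \<in> S" and T: "T \<ge> 1"
  shows "(\<Sum>n=1..T. u n z - u n (X n)) \<le> R / (2 * \<gamma> T) + 1/2 * V0\<^sup>2 * (\<Sum>n=1..T. \<gamma> n)"
proof -
  define D where "D n = (norm (X n - z))\<^sup>2" for n
  have "(\<Sum>n=1..T. u n z - u n (X n)) \<le> (\<Sum>n=1..T. (D n - D (Suc n)) / (2 * \<gamma> n) + \<gamma> n * V0\<^sup>2 / 2)"
  proof (rule sum_mono)
    fix n
    assume "n \<in> {1..T}"
    then have n: "n \<ge> 1"
      by simp
    show "u n z - u n (X n) \<le> (D n - D (Suc n)) / (2 * \<gamma> n) + \<gamma> n * V0\<^sup>2 / 2"
      using tangent[OF n z] projected_step_inner_le[OF pos[OF n] step[OF n z] V[OF n]]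
      by (simp add: D_def)
  qed
  also have "\<dots> = (\<Sum>n=1..T. (D n - D (Suc n)) / (2 * \<gamma> n)) + 1/2 * V0\<^sup>2 * (\<Sum>n=1..T. \<gamma> n)"
    by (simp add: sum.distrib sum_distrib_left sum_divide_distrib mult_ac)
  also have "(\<Sum>n=1..T. (D n - D (Suc n)) / (2 * \<gamma> n)) \<le> (R - D (Suc T)) / (2 * \<gamma> T)"
    by (rule weighted_telescoping_le[OF _ pos mono T]) (simp add: D_def diam X z)
  also have "\<dots> \<le> R / (2 * \<gamma> T)"
    using pos[OF T] by (simp add: D_def divide_right_mono)
  finally show ?thesis
    by simp
qed

section \<open>Step-size sequences\<close>

lemma sum_inverse_sqrt_le: "(\<Sum>n=1..T. 1 / sqrt (real n)) \<le> 2 * sqrt (real T)"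
proof (induction T)
  case 0
  then show ?case
    by simp
next
  case (Suc T)
  define a b where "a = sqrt (real T)" and "b = sqrt (real (Suc T))"
  have b0: "b > 0" and ab: "b\<^sup>2 = a\<^sup>2 + 1"
    by (simp_all add: a_def b_def)
  have "2 * a * b \<le> 2 * a\<^sup>2 + 1"
    using ab zero_le_power2[of "b - a"] by (simp add: power2_eq_square algebra_simps)
  then have "2 * a + 1 / b \<le> 2 * b"
    using ab b0 by (simp add: field_simps power2_eq_square)
  then show ?case
    using Suc.IH by (simp add: a_def b_def)
qed

lemma cesaro_mean_tendsto_zero:
  fixes \<gamma> :: "nat \<Rightarrow> real"
  assumes "\<gamma> \<longlonglongrightarrow> 0"
  shows "(\<lambda>T. (\<Sum>n=1..T. \<gamma> n) / real T) \<longlonglongrightarrow> 0"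
proof (rule LIMSEQ_I)
  fix r :: real
  assume r: "r > 0"
  obtain N where N: "\<And>n. n \<ge> N \<Longrightarrow> \<bar>\<gamma> n\<bar> < r / 2"
    using LIMSEQ_D[OF assms, of "r/2"] r by auto
  define C where "C = (\<Sum>n=1..N. \<bar>\<gamma> n\<bar>)"
  obtain M :: nat where M: "M > 2 * C / r"
    using reals_Archimedean2 by blast
  show "\<exists>no. \<forall>T\<ge>no. norm ((\<Sum>n=1..T. \<gamma> n) / real T - 0) < r"
  proof (intro exI allI impI)
    fix T
    assume T: "T \<ge> max (Suc N) M"
    then have TN: "T > N" and Tp: "real T > 0"
      by auto
    have "\<bar>\<Sum>n=1..T. \<gamma> n\<bar> \<le> (\<Sum>n=1..T. \<bar>\<gamma> n\<bar>)"
      by (rule sum_abs)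
    also have "\<dots> = C + (\<Sum>n=N+1..T. \<bar>\<gamma> n\<bar>)"
      unfolding C_def using sum.ub_add_nat[of 1 N "\<lambda>n. \<bar>\<gamma> n\<bar>" "T - N"] TN by simp
    also have "(\<Sum>n=N+1..T. \<bar>\<gamma> n\<bar>) \<le> (\<Sum>n=N+1..T. r / 2)"
    proof (rule sum_mono)
      fix n
      assume "n \<in> {N+1..T}"
      then show "\<bar>\<gamma> n\<bar> \<le> r / 2"
        using N[of n] by simp
    qed
    also have "\<dots> \<le> real T * (r / 2)"
      using r by (simp add: mult_right_mono)
    finally have "\<bar>\<Sum>n=1..T. \<gamma> n\<bar> / real T \<le> C / real T + r / 2"
      using Tp by (simp add: field_simps)
    moreover have "2 * C < real T * r"
      using M T r by (simp add: field_simps) (smt (verit) of_nat_mono mult_left_mono)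
    then have "C / real T < r / 2"
      using Tp by (simp add: field_simps)
    ultimately have "\<bar>\<Sum>n=1..T. \<gamma> n\<bar> / real T < r"
      by linarith
    then show "norm ((\<Sum>n=1..T. \<gamma> n) / real T - 0) < r"
      by simp
  qed
qed

lemma limsup_regret_average_nonpos:
  fixes r \<gamma> :: "nat \<Rightarrow> real"
  assumes bound: "\<And>T. T \<ge> 1 \<Longrightarrow> r T \<le> 1 / \<gamma> T + c * (\<Sum>n=1..T. \<gamma> n)"
    and lim: "\<gamma> \<longlonglongrightarrow> 0" and slow: "filterlim (\<lambda>n. real n * \<gamma> n) at_top sequentially"
  shows "limsup (\<lambda>T. ereal (r T / real T)) \<le> 0"
proof -
  define b where "b T = inverse (real T * \<gamma> T) + c * ((\<Sum>n=1..T. \<gamma> n) / real T)" for T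
  have "eventually (\<lambda>T. ereal (r T / real T) \<le> ereal (b T)) sequentially"
    using eventually_ge_at_top[of 1]
  proof eventually_elim
    case (elim T)
    then have "r T / real T \<le> (1 / \<gamma> T + c * (\<Sum>n=1..T. \<gamma> n)) / real T"
      using bound by (simp add: divide_right_mono)
    also have "\<dots> = b T"
      using elim by (simp add: b_def field_simps)
    finally show ?case
      by simp
  qed
  then have "limsup (\<lambda>T. ereal (r T / real T)) \<le> limsup (\<lambda>T. ereal (b T))"
    by (rule Limsup_mono)
  moreover have "b \<longlonglongrightarrow> 0 + c * 0"
    unfolding b_def
    by (intro tendsto_add tendsto_mult tendsto_const tendsto_inverse_0_at_top slow
        cesaro_mean_tendsto_zero[OF lim])
  then have "limsup (\<lambda>T. ereal (b T)) = 0"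
    by (simp add: lim_imp_Limsup tendsto_ereal zero_ereal_def)
  ultimately show ?thesis
    by simp
qed

lemma regret_bound_inverse_sqrt_steps:
  fixes \<gamma> :: "nat \<Rightarrow> real"
  assumes bound: "r \<le> 1 / \<gamma> T + 1/2 * V0\<^sup>2 * (\<Sum>n=1..T. \<gamma> n)"
    and g: "g > 0" and steps: "\<forall>n\<ge>1. \<gamma> n = g / sqrt (real n)" and T: "T \<ge> 1"
  shows "r \<le> (1 + g\<^sup>2 * V0\<^sup>2) / g * sqrt (real T)"
proof -
  have "(\<Sum>n=1..T. \<gamma> n) = g * (\<Sum>n=1..T. 1 / sqrt (real n))"
    unfolding sum_distrib_left by (rule sum.cong) (use steps in auto)
  also have "\<dots> \<le> g * (2 * sqrt (real T))"
    using g sum_inverse_sqrt_le[of T] by (simp add: mult_left_mono)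
  finally have "1/2 * V0\<^sup>2 * (\<Sum>n=1..T. \<gamma> n) \<le> 1/2 * V0\<^sup>2 * (g * (2 * sqrt (real T)))"
    by (rule mult_left_mono) simp
  moreover have "1 / \<gamma> T = sqrt (real T) / g"
    using steps T g by simp
  ultimately have "r \<le> sqrt (real T) / g + 1/2 * V0\<^sup>2 * (g * (2 * sqrt (real T)))"
    using bound by linarith
  also have "\<dots> = (1 + g\<^sup>2 * V0\<^sup>2) / g * sqrt (real T)"
    using g by (simp add: field_simps power2_eq_square)
  finally show ?thesis .
qed

theorem theorem1:
  fixes Pc Pmax V0 :: real
    and H :: "nat \<Rightarrow> complex^('k::finite \<times> 't::finite)^('k \<times> 'r::finite)"
    and \<gamma> :: "nat \<Rightarrow> real"
    and X :: "nat \<Rightarrow> complex^('k \<times> 't)^('k \<times> 't)"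
  assumes Pc: "Pc > 0" and Pmax: "Pmax > 0" and V0: "V0 > 0"
    and H_blockdiag: "\<And>n. block_diag (H n)"
    and H_bounded: "\<exists>B. \<forall>n. frob (H n) \<le> B"
    and V_bound: "\<And>n. n \<ge> 1 \<Longrightarrow> frob (grad Pc Pmax (H n) (X n)) \<le> V0"
    and step_pos: "\<And>n. n \<ge> 1 \<Longrightarrow> \<gamma> n > 0"
    and step_noninc: "\<And>m n. 1 \<le> m \<Longrightarrow> m \<le> n \<Longrightarrow> \<gamma> n \<le> \<gamma> m"
    and step_lim: "\<gamma> \<longlonglongrightarrow> 0"
    and step_slow: "filterlim (\<lambda>n. real n * \<gamma> n) at_top sequentially"
    and X1: "X 1 \<in> Xset"
    and X_rec: "\<And>n. n \<ge> 1 \<Longrightarrow>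
                  X (Suc n) = proj (X n + \<gamma> n *\<^sub>R grad Pc Pmax (H n) (X n))"
  shows "limsup (\<lambda>T. ereal (regret Pc Pmax H (\<lambda>n. Qmap Pc Pmax (X n)) T / real T)) \<le> 0
         \<and> (\<forall>T\<ge>1. regret Pc Pmax H (\<lambda>n. Qmap Pc Pmax (X n)) T
                \<le> 1 / \<gamma> T + 1/2 * V0\<^sup>2 * (\<Sum>n = 1..T. \<gamma> n))
         \<and> (\<forall>g>0. (\<forall>n\<ge>1. \<gamma> n = g / sqrt (real n)) \<longrightarrow>
              (\<forall>T\<ge>1. regret Pc Pmax H (\<lambda>n. Qmap Pc Pmax (X n)) T
                 \<le> (1 + g\<^sup>2 * V0\<^sup>2) / g * sqrt (real T)))"
proof -
  define V where "V n = grad Pc Pmax (H n) (X n)" for n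
  define u where "u n W = EE Pc (H n) (Qmap Pc Pmax W)" for n W
  have X_in: "X n \<in> Xset" if "n \<ge> 1" for n
    using that by (induction n rule: nat_induct_at_least) (fact X1, simp add: X_rec proj_mem_Xset)
  have tangent: "u n Z - u n (X n) \<le> inner (V n) (Z - X n)" if "n \<ge> 1" "Z \<in> Xset" for n Z
    using EE_Qmap_le_tangent[OF Pc Pmax, of "X n" Z "H n"] X_in[OF that(1)] that(2)
    by (simp add: u_def V_def Xset_eq_Qset Qset_psd mem_Qset_iff)
  have bound: "regret Pc Pmax H (\<lambda>n. Qmap Pc Pmax (X n)) T \<le> 1 / \<gamma> T + 1/2 * V0\<^sup>2 * (\<Sum>n = 1..T. \<gamma> n)"
    if T: "T \<ge> 1" for T
    unfolding regret_def
  proof (rule cSUP_least)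
    show "Qset Pmax \<noteq> {}"
      using zero_mem_Qset[of Pmax] Pmax by auto
  next
    fix Q :: "complex^('k \<times> 't)^('k \<times> 't)"
    assume "Q \<in> Qset Pmax"
    then obtain Z :: "complex^('k \<times> 't)^('k \<times> 't)" where Z: "Z \<in> Xset" "Qmap Pc Pmax Z = Q"
      using Qmap_surj[OF Pc Pmax] by blast
    have "(\<Sum>n = 1..T. u n Z - u n (X n)) \<le> 2 / (2 * \<gamma> T) + 1/2 * V0\<^sup>2 * (\<Sum>n = 1..T. \<gamma> n)"
      by (rule online_gradient_ascent_regret[where S=Xset and V=V and \<gamma>=\<gamma>])
        (use Xset_dist_sq_le_2 X_in X_rec proj_nonexpansive V_bound tangent step_pos step_noninc Z T
          in \<open>simp_all add: V_def norm_eq_frob\<close>)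
    then show "(\<Sum>n = 1..T. EE Pc (H n) Q - EE Pc (H n) (Qmap Pc Pmax (X n)))
        \<le> 1 / \<gamma> T + 1/2 * V0\<^sup>2 * (\<Sum>n = 1..T. \<gamma> n)"
      by (simp add: u_def Z(2))
  qed
  show ?thesis
    using limsup_regret_average_nonpos[OF _ step_lim step_slow] bound
      regret_bound_inverse_sqrt_steps[OF bound]
    by blast
qed

end
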